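(* Consider the problems LGopt and QEPmin defined in the context. (1) Let $(\lambda_*,u_* )$ be a minimizer of LGopt. Then there exists $z_*$ such that $(\lambda_*,z_* )$ is a minimizer of QEPmin; specifically, one may take $z_*=(PAP-\lambda_* I)^{\dagger}u_*$ if either $\lambda_*\notin\operatorname{eig}(PAP)$, or $\lambda_*\in\operatorname{eig}(PAP)$ but there is no corresponding eigenvector of $PAP$ lying in $\mathcal N(C^{\top})$; and $z_*=s$ if $\lambda_*\in\operatorname{eig}(PAP)$ and $s\in\mathcal N(C^{\top})$ is a corresponding eigenvector of $PAP$. (2) Let $(\lambda_*,z_* )$ be a minimizer of QEPmin. Then there exists $u_*\in\mathbb{R}^n$ such that $(\lambda_*,u_* )$ is a minimizer of LGopt; specifically, $u_*=-\frac{\gamma^2}{b_0^{\top}z_*}(PAP-\lambda_* I)z_*$ if $b_0^{\top}z_*\neq 0$, and $u_*=x_*+\sqrt{\gamma^2-\|x_*\|^2}\,\frac{z_*}{\|z_*\|}$ if $b_0^{\top}z_*=0$, where in the latter case $x_*=-(PAP-\lambda_* I)^{\dagger}b_0$, and it is guaranteed that $\|x_*\|\le\gamma$.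
   Context: Let $A\in\mathbb{R}^{n\times n}$ be symmetric, $C\in\mathbb{R}^{n\times m}$ ($m<n$) have full column rank, and $b\in\mathbb{R}^m$. Let $n_0=(C^{\top})^{\dagger}b=C(C^{\top}C)^{-1}b$; assume $\|n_0\|<1$ and set $\gamma=\sqrt{1-\|n_0\|^2}>0$. Let $P=I-C(C^{\top}C)^{-1}C^{\top}$ (the orthogonal projector onto the null space $\mathcal N(C^{\top})$) and $b_0=PAn_0$; assume $b_0\neq 0$. $X^\dagger$ is the Moore–Penrose inverse, $\operatorname{eig}(\cdot)$ the set of eigenvalues, norms are Euclidean. LGopt: minimize $\lambda$ over pairs $(\lambda,u)\in\mathbb{R}\times\mathbb{R}^n$ satisfying $(PAP-\lambda I)u=-b_0$, $\|u\|=\gamma$, $u\in\mathcal N(C^{\top})$; a minimizer is a feasible pair with the smallest $\lambda$. QEPmin: minimize $\lambda$ over pairs $(\lambda,z)$ with $\lambda\in\mathbb{R}$, $0\neq z\in\mathcal N(C^{\top})$ and $(PAP-\lambda I)^2z=\gamma^{-2}b_0b_0^{\top}z$; a minimizer is a feasible pair with the smallest $\lambda$. *)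

theory Defs
  imports "HOL-Analysis.Analysis"
begin

definition mp_pinv :: "real^'m^'n \<Rightarrow> real^'n^'m" where
  "mp_pinv X = (THE Y. X ** Y ** X = X \<and> Y ** X ** Y = Y \<and>
       transpose (X ** Y) = X ** Y \<and> transpose (Y ** X) = Y ** X)"

definition eig :: "real^'n^'n \<Rightarrow> real set" where
  "eig M = {lam. \<exists>v. v \<noteq> 0 \<and> M *v v = lam *\<^sub>R v}"

definition nullT :: "real^'m^'n \<Rightarrow> (real^'n) set" where
  "nullT C = {x. transpose C *v x = 0}"

definition nvec :: "real^'m^'n \<Rightarrow> real^'m \<Rightarrow> real^'n" where
  "nvec C b = C *v (matrix_inv (transpose C ** C) *v b)"

definition gam :: "real^'m^'n \<Rightarrow> real^'m \<Rightarrow> real" where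
  "gam C b = sqrt (1 - (norm (nvec C b))\<^sup>2)"

definition projP :: "real^'m^'n \<Rightarrow> real^'n^'n" where
  "projP C = mat 1 - C ** matrix_inv (transpose C ** C) ** transpose C"

definition bvec :: "real^'n^'n \<Rightarrow> real^'m^'n \<Rightarrow> real^'m \<Rightarrow> real^'n" where
  "bvec A C b = projP C *v (A *v nvec C b)"

definition PAP :: "real^'n^'n \<Rightarrow> real^'m^'n \<Rightarrow> real^'n^'n" where
  "PAP A C = projP C ** A ** projP C"

definition LG_feasible :: "real^'n^'n \<Rightarrow> real^'m^'n \<Rightarrow> real^'m \<Rightarrow> real \<Rightarrow> real^'n \<Rightarrow> bool" where
  "LG_feasible A C b lam u \<longleftrightarrow>
     (PAP A C - mat lam) *v u = - bvec A C b \<and> norm u = gam C b \<and> u \<in> nullT C"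

definition LG_min :: "real^'n^'n \<Rightarrow> real^'m^'n \<Rightarrow> real^'m \<Rightarrow> real \<Rightarrow> real^'n \<Rightarrow> bool" where
  "LG_min A C b lam u \<longleftrightarrow> LG_feasible A C b lam u \<and>
     (\<forall>lam' u'. LG_feasible A C b lam' u' \<longrightarrow> lam \<le> lam')"

definition QEP_feasible :: "real^'n^'n \<Rightarrow> real^'m^'n \<Rightarrow> real^'m \<Rightarrow> real \<Rightarrow> real^'n \<Rightarrow> bool" where
  "QEP_feasible A C b lam z \<longleftrightarrow> z \<noteq> 0 \<and> z \<in> nullT C \<and>
     ((PAP A C - mat lam) ** (PAP A C - mat lam)) *v z
       = inverse ((gam C b)\<^sup>2) *\<^sub>R ((bvec A C b \<bullet> z) *\<^sub>R bvec A C b)"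

definition QEP_min :: "real^'n^'n \<Rightarrow> real^'m^'n \<Rightarrow> real^'m \<Rightarrow> real \<Rightarrow> real^'n \<Rightarrow> bool" where
  "QEP_min A C b lam z \<longleftrightarrow> QEP_feasible A C b lam z \<and>
     (\<forall>lam' z'. QEP_feasible A C b lam' z' \<longrightarrow> lam \<le> lam')"

end

theory Submission
  imports Defs
begin

text \<open>
  Write \<open>M = PAP\<close>. The minimal \<open>\<lambda>\<close> of LGopt is the Lagrange multiplier of the
  trust-region subproblem: minimize \<open>u\<^sup>T M u / 2 + b\<^sub>0\<^sup>T u\<close> over the sphere
  \<open>\<parallel>u\<parallel> = \<gamma>\<close> in \<open>N(C\<^sup>T)\<close>. A global minimizer exists by compactness; first-order
  optimality along the great circles through it gives \<open>(M - \<lambda> I) u = -b\<^sub>0\<close>, and comparing it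
  with its Householder reflections shows that \<open>M - \<lambda> I\<close> is positive semidefinite on
  \<open>N(C\<^sup>T)\<close>. So this \<open>\<lambda>\<close> lies below every eigenvalue of \<open>M\<close> with an eigenvector in \<open>N(C\<^sup>T)\<close>.

  Every LG-feasible pair \<open>(\<lambda>, u)\<close> gives a QEP-feasible one with the same \<open>\<lambda>\<close>: an eigenvector
  of \<open>M\<close> in \<open>N(C\<^sup>T)\<close> for \<open>\<lambda>\<close> if there is one, and otherwise \<open>z = (M - \<lambda> I)\<^sup>\<dagger> u\<close>, which
  then solves \<open>(M - \<lambda> I) z = u\<close> and has \<open>b\<^sub>0\<^sup>T z = -\<gamma>\<^sup>2\<close>. Conversely a QEP-feasible \<open>z\<close>
  with \<open>b\<^sub>0\<^sup>T z \<noteq> 0\<close> yields the LG-feasible \<open>u = -\<gamma>\<^sup>2 (M - \<lambda> I) z / b\<^sub>0\<^sup>T z\<close>, while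
  one with \<open>b\<^sub>0\<^sup>T z = 0\<close> is an eigenvector of \<open>M\<close> in \<open>N(C\<^sup>T)\<close>, so its \<open>\<lambda>\<close> is at least the
  trust-region multiplier. Hence both problems have the same minimal \<open>\<lambda>\<close>. When
  \<open>b\<^sub>0\<^sup>T z = 0\<close>, an LG solution at that \<open>\<lambda>\<close> is the minimum-norm solution
  \<open>-(M - \<lambda> I)\<^sup>\<dagger> b\<^sub>0\<close> plus a multiple of \<open>z\<close>.
\<close>

section \<open>Symmetric matrices and projectors\<close>

lemma matrix_vector_mult_mat [simp]: "(mat c :: real^'n^'n) *v x = c *\<^sub>R x"
  using fun_cong[OF matrix_vector_mul(3)[OF bounded_linear_scaleR_right, of c]]
  by (simp add: matrix_scaleR)

lemma matrix_vector_mult_uminus_right: "(A :: real^'n^'m) *v (- x) = - (A *v x)"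
  using linear_neg[OF matrix_vector_mul_linear] .

lemma inner_matrix_transpose: "x \<bullet> (A *v y) = (transpose A *v x) \<bullet> (y :: real^'m)"
  by (simp add: dot_lmul_matrix)

lemma symmetric_matrix_inner:
  fixes S :: "real^'n^'n"
  assumes "transpose S = S"
  shows "x \<bullet> (S *v y) = (S *v x) \<bullet> y"
  using inner_matrix_transpose[of x S y] assms by (simp only:)

lemma symmetric_matrixI:
  fixes S :: "real^'n^'n"
  assumes "\<And>x y. x \<bullet> (S *v y) = (S *v x) \<bullet> y"
  shows "transpose S = S"
proof -
  have "(transpose S *v x - S *v x) \<bullet> y = 0" for x y
    using assms[of x y] inner_matrix_transpose[of x S y] by (simp add: inner_diff_left)
  then show ?thesis
    by (metis inner_eq_zero_iff matrix_eq right_minus_eq)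
qed

lemma matrix_inv_invertible:
  fixes A :: "real^'n^'n"
  assumes "invertible A"
  shows "A ** matrix_inv A = mat 1" "matrix_inv A ** A = mat 1"
proof -
  have "A ** matrix_inv A = mat 1 \<and> matrix_inv A ** A = mat 1"
    using assms unfolding invertible_def matrix_inv_def by (rule someI_ex)
  then show "A ** matrix_inv A = mat 1" "matrix_inv A ** A = mat 1" by blast+
qed

lemma matrix_inv_symmetric:
  fixes A :: "real^'n^'n"
  assumes "invertible A" and "transpose A = A"
  shows "transpose (matrix_inv A) = matrix_inv A"
proof -
  let ?B = "matrix_inv A"
  have BA: "transpose ?B ** A = mat 1"
    using matrix_inv_invertible(1)[OF assms(1)] assms(2)
    by (metis matrix_transpose_mul transpose_mat)
  have "transpose ?B = transpose ?B ** (A ** ?B)"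
    by (simp add: matrix_inv_invertible(1)[OF assms(1)])
  also have "\<dots> = (transpose ?B ** A) ** ?B" by (simp add: matrix_mul_assoc)
  finally show ?thesis using BA by simp
qed

lemma invertible_gram_matrix:
  fixes C :: "real^'m^'n"
  assumes "rank C = CARD('m)"
  shows "invertible (transpose C ** C)"
proof -
  have "x = 0" if "(transpose C ** C) *v x = 0" for x
  proof -
    have "(C *v x) \<bullet> (C *v x) = x \<bullet> ((transpose C ** C) *v x)"
      by (simp add: inner_matrix_transpose[of "C *v x"] matrix_vector_mul_assoc[symmetric]
          inner_commute del: transpose_matrix_vector)
    then have "C *v x = C *v 0" using that by simp
    then show "x = 0" using assms full_rank_injective by (metis injD)
  qed
  then obtain B where "B ** (transpose C ** C) = mat 1" using matrix_left_invertible_ker by blast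
  then show ?thesis using invertible_left_inverse by blast
qed

lemma orthogonal_projector_exists:
  fixes S :: "(real^'n) set"
  assumes "subspace S"
  obtains Q :: "real^'n^'n"
  where "transpose Q = Q" "\<And>x. Q *v x \<in> S" "\<And>x. x \<in> S \<Longrightarrow> Q *v x = x"
proof -
  obtain T where T: "T \<subseteq> S" "pairwise orthogonal T" "span T = S"
    using orthogonal_basis_subspace[OF assms] by metis
  define q where "q x = (\<Sum>b\<in>T. (b \<bullet> x / (b \<bullet> b)) *\<^sub>R b)" for x
  have "bounded_linear q"
    unfolding q_def
    by (intro bounded_linear_sum bounded_linear_compose[OF bounded_linear_scaleR_left]
        bounded_linear_compose[OF bounded_linear_divide bounded_linear_inner_right])
  then have Qq: "matrix q *v x = q x" for x
    by (metis matrix_vector_mul(3))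
  have qS: "q x \<in> S" for x
  proof -
    have "q x \<in> span T" unfolding q_def by (intro span_sum span_mul span_base)
    then show ?thesis using T by simp
  qed
  have orth: "(x - q x) \<bullet> w = 0" if "w \<in> S" for x w
    using Gram_Schmidt_step[OF T(2), of w x] that T(3)
    unfolding q_def orthogonal_def by (simp add: inner_commute)
  have "q x = x" if "x \<in> S" for x
  proof -
    have "x - q x \<in> S" using that qS assms by (simp add: subspace_diff)
    then have "(x - q x) \<bullet> (x - q x) = 0" using orth by blast
    then show ?thesis by simp
  qed
  moreover have "transpose (matrix q) = matrix q"
  proof (rule symmetric_matrixI)
    fix x y
    have "x \<bullet> q y = q x \<bullet> q y" using orth[OF qS] by (simp add: inner_diff_left)
    also have "\<dots> = q x \<bullet> y" using orth[OF qS, of y x]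
      by (simp add: inner_diff_right inner_commute)
    finally show "x \<bullet> (matrix q *v y) = (matrix q *v x) \<bullet> y" by (simp add: Qq)
  qed
  ultimately show ?thesis
    using that[of "matrix q"] qS by (simp add: Qq)
qed

lemma kernel_projector_exists:
  fixes X :: "real^'n^'n"
  assumes sX: "transpose X = X"
  obtains Q :: "real^'n^'n"
  where "transpose Q = Q" "\<And>x. X *v (Q *v x) = 0" "\<And>x. Q *v (X *v x) = 0"
    "\<And>x. X *v x = 0 \<Longrightarrow> Q *v x = x"
proof -
  have "subspace {x. X *v x = 0}"
    by (rule linear_subspace_kernel) simp
  then obtain Q where sQ: "transpose Q = Q" and XQ: "\<And>x. X *v (Q *v x) = 0"
    and "\<And>x. X *v x = 0 \<Longrightarrow> Q *v x = x"
    by (rule orthogonal_projector_exists) auto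
  moreover have "Q *v (X *v v) = 0" for v
  proof -
    have "(Q *v (X *v v)) \<bullet> w = 0" for w
      using symmetric_matrix_inner[OF sQ, of "X *v v" w]
        symmetric_matrix_inner[OF sX, of v "Q *v w"] XQ[of w]
      by (simp add: inner_commute)
    from this[of "Q *v (X *v v)"] show ?thesis by simp
  qed
  ultimately show ?thesis using that by blast
qed

section \<open>The Moore--Penrose inverse of a symmetric matrix\<close>

definition penrose :: "real^'m^'n \<Rightarrow> real^'n^'m \<Rightarrow> bool" where
  "penrose X Y \<longleftrightarrow> X ** Y ** X = X \<and> Y ** X ** Y = Y \<and>
     transpose (X ** Y) = X ** Y \<and> transpose (Y ** X) = Y ** X"

lemma penrose_unique:
  assumes "penrose X Y1" "penrose X Y2"
  shows "Y1 = Y2"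
proof -
  have X: "X ** Y1 ** X = X" "X ** Y2 ** X = X"
    and Y: "Y1 ** X ** Y1 = Y1" "Y2 ** X ** Y2 = Y2"
    and XY: "transpose (X ** Y1) = X ** Y1" "transpose (X ** Y2) = X ** Y2"
    and YX: "transpose (Y1 ** X) = Y1 ** X" "transpose (Y2 ** X) = Y2 ** X"
    using assms unfolding penrose_def by auto
  have XY12: "X ** Y1 = X ** Y2"
  proof -
    have "X ** Y1 = transpose (X ** Y2 ** X ** Y1)" using X(2) XY(1) by simp
    also have "\<dots> = transpose (X ** Y1) ** transpose (X ** Y2)"
      by (simp add: matrix_transpose_mul matrix_mul_assoc)
    also have "\<dots> = X ** Y1 ** X ** Y2" using XY by (simp add: matrix_mul_assoc)
    also have "\<dots> = X ** Y2" using X(1) by simp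
    finally show ?thesis .
  qed
  have YX12: "Y1 ** X = Y2 ** X"
  proof -
    have "Y1 ** X = transpose (Y1 ** (X ** Y2 ** X))" using X(2) YX(1) by simp
    also have "\<dots> = transpose (Y2 ** X) ** transpose (Y1 ** X)"
      by (simp add: matrix_transpose_mul matrix_mul_assoc)
    also have "\<dots> = Y2 ** (X ** Y1 ** X)" using YX by (simp add: matrix_mul_assoc)
    also have "\<dots> = Y2 ** X" using X(1) by simp
    finally show ?thesis .
  qed
  have "Y1 = Y1 ** X ** Y1" using Y by simp
  also have "\<dots> = Y2 ** (X ** Y1)" by (simp add: YX12 matrix_mul_assoc)
  also have "\<dots> = Y2 ** X ** Y2" by (simp add: XY12 matrix_mul_assoc)
  finally show ?thesis using Y by simp
qed

lemma invertible_add_kernel_projector: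
  fixes X Q :: "real^'n^'n"
  assumes XQ: "\<And>x. X *v (Q *v x) = 0" and QX: "\<And>x. Q *v (X *v x) = 0"
    and Qfix: "\<And>x. X *v x = 0 \<Longrightarrow> Q *v x = x"
  shows "invertible (X + Q)"
proof -
  have "v = 0" if "(X + Q) *v v = 0" for v
  proof -
    have Xv: "X *v v = - (Q *v v)"
      using that by (simp add: matrix_vector_mult_add_rdistrib eq_neg_iff_add_eq_0)
    have "Q *v v = Q *v (Q *v v)" using Qfix[OF XQ] by simp
    also have "\<dots> = Q *v (- (X *v v))" by (simp add: Xv)
    also have "\<dots> = 0" by (simp add: matrix_vector_mult_uminus_right QX)
    finally have "Q *v v = 0" .
    with Xv have "X *v v = 0" by simp
    with \<open>Q *v v = 0\<close> show "v = 0" using Qfix by simp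
  qed
  then obtain B where "B ** (X + Q) = mat 1" using matrix_left_invertible_ker by blast
  then show ?thesis using invertible_left_inverse by blast
qed

text \<open>With \<open>Q\<close> the orthogonal projector onto the kernel of \<open>X\<close>, the inverse of \<open>X + Q\<close>
  minus \<open>Q\<close> is the Moore--Penrose inverse of \<open>X\<close>.\<close>

lemma penrose_exists_symmetric:
  fixes X :: "real^'n^'n"
  assumes sX: "transpose X = X"
  obtains Y where "penrose X Y"
proof -
  obtain Q where sQ: "transpose Q = Q" and XQ: "\<And>x. X *v (Q *v x) = 0"
    and QX: "\<And>x. Q *v (X *v x) = 0" and Qfix: "\<And>x. X *v x = 0 \<Longrightarrow> Q *v x = x"
    using kernel_projector_exists[OF sX] by blast
  have QQ: "Q *v (Q *v v) = Q *v v" for v using Qfix XQ by blast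
  define W where "W = matrix_inv (X + Q)"
  have ZW: "X *v (W *v v) + Q *v (W *v v) = v" and WZ: "W *v (X *v v + Q *v v) = v" for v
    using matrix_inv_invertible[OF invertible_add_kernel_projector[OF XQ QX Qfix]]
    unfolding W_def
    by (metis matrix_vector_mul_assoc matrix_vector_mul_lid matrix_vector_mult_add_rdistrib)+
  have WQ: "W *v (Q *v v) = Q *v v" for v
    using WZ[of "Q *v v"] by (simp add: XQ QQ)
  have QW: "Q *v (W *v v) = Q *v v" for v
    using arg_cong[OF ZW[of v], of "(*v) Q"] by (simp add: matrix_vector_right_distrib QX QQ)
  define Y where "Y = W - Q"
  have Yv: "Y *v v = W *v v - Q *v v" for v by (simp add: Y_def matrix_vector_mult_diff_rdistrib)
  have XY: "X *v (Y *v v) = v - Q *v v" for v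
    using ZW[of v] QW[of v] by (simp add: Yv matrix_vector_mult_diff_distrib XQ algebra_simps)
  have YX: "Y *v (X *v v) = v - Q *v v" for v
    using WZ[of v] WQ[of v] by (simp add: Yv matrix_vector_right_distrib QX algebra_simps)
  have sym_id_minus_Q: "x \<bullet> (y - Q *v y) = (x - Q *v x) \<bullet> y" for x y
    using symmetric_matrix_inner[OF sQ, of x y] by (simp add: inner_diff_left inner_diff_right)
  have "X ** Y ** X = X"
    by (simp add: matrix_eq matrix_vector_mul_assoc[symmetric] XY QX)
  moreover have "Y ** X ** Y = Y"
  proof -
    have "Q *v (Y *v v) = 0" for v by (simp add: Yv matrix_vector_mult_diff_distrib QW QQ)
    then show ?thesis by (simp add: matrix_eq matrix_vector_mul_assoc[symmetric] YX)
  qed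
  moreover have "transpose (X ** Y) = X ** Y"
    by (rule symmetric_matrixI) (simp add: matrix_vector_mul_assoc[symmetric] XY sym_id_minus_Q)
  moreover have "transpose (Y ** X) = Y ** X"
    by (rule symmetric_matrixI) (simp add: matrix_vector_mul_assoc[symmetric] YX sym_id_minus_Q)
  ultimately show ?thesis using that unfolding penrose_def by blast
qed

lemma penrose_mp_pinv:
  fixes X :: "real^'n^'n"
  assumes "transpose X = X"
  shows "penrose X (mp_pinv X)"
proof -
  obtain Y where "penrose X Y" using penrose_exists_symmetric[OF assms] .
  then have "\<exists>!Y. penrose X Y" using penrose_unique by blast
  then show ?thesis unfolding mp_pinv_def penrose_def[symmetric] by (rule theI')
qed

lemma mp_pinv_solves:
  fixes X :: "real^'n^'n"
  assumes "transpose X = X" and "X *v u = c"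
  shows "X *v (mp_pinv X *v c) = c"
  using penrose_mp_pinv[OF assms(1)] assms(2) unfolding penrose_def
  by (metis matrix_vector_mul_assoc)

lemma mp_pinv_orthogonal_kernel:
  fixes X :: "real^'n^'n"
  assumes sX: "transpose X = X" and "X *v k = 0"
  shows "(mp_pinv X *v c) \<bullet> k = 0"
proof -
  let ?Y = "mp_pinv X"
  have YXY: "?Y ** X ** ?Y = ?Y" and sYX: "transpose (?Y ** X) = ?Y ** X"
    using penrose_mp_pinv[OF sX] unfolding penrose_def by blast+
  have "(?Y *v c) \<bullet> k = ((?Y ** X) *v (?Y *v c)) \<bullet> k"
    using YXY by (metis matrix_vector_mul_assoc)
  also have "\<dots> = (?Y *v c) \<bullet> (?Y *v (X *v k))"
    using symmetric_matrix_inner[OF sYX] by (simp add: matrix_vector_mul_assoc)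
  finally show ?thesis using \<open>X *v k = 0\<close> by simp
qed

lemma mp_pinv_residual_in_kernel:
  fixes X :: "real^'n^'n"
  assumes sX: "transpose X = X"
  shows "X *v (c - X *v (mp_pinv X *v c)) = 0"
proof -
  let ?Y = "mp_pinv X" and ?r = "c - X *v (mp_pinv X *v c)"
  have XYX: "X ** ?Y ** X = X" and sXY: "transpose (X ** ?Y) = X ** ?Y"
    using penrose_mp_pinv[OF sX] unfolding penrose_def by blast+
  have "?r \<bullet> (X *v w) = 0" for w
  proof -
    have "(X *v (?Y *v c)) \<bullet> (X *v w) = c \<bullet> ((X ** ?Y) *v (X *v w))"
      using symmetric_matrix_inner[OF sXY, of c "X *v w"] by (simp add: matrix_vector_mul_assoc)
    also have "\<dots> = c \<bullet> (X *v w)" using XYX by (metis matrix_vector_mul_assoc)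
    finally show ?thesis by (simp add: inner_diff_left)
  qed
  from this[of "X *v ?r"] show ?thesis
    by (metis symmetric_matrix_inner[OF sX] inner_eq_zero_iff)
qed

lemma mp_pinv_min_norm:
  fixes X :: "real^'n^'n"
  assumes sX: "transpose X = X" and "X *v u = c"
  shows "norm (mp_pinv X *v c) \<le> norm u"
proof -
  define x where "x = mp_pinv X *v c"
  have "X *v (u - x) = 0"
    using mp_pinv_solves[OF assms] assms(2) by (simp add: x_def matrix_vector_mult_diff_distrib)
  then have "orthogonal x (u - x)"
    unfolding x_def orthogonal_def by (rule mp_pinv_orthogonal_kernel[OF sX])
  then have "(norm u)\<^sup>2 = (norm x)\<^sup>2 + (norm (u - x))\<^sup>2"
    using norm_add_Pythagorean[of x "u - x"] by simp
  then have "(norm x)\<^sup>2 \<le> (norm u)\<^sup>2" by simp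
  then show ?thesis unfolding x_def by (rule power2_le_imp_le) simp
qed

section \<open>Polynomial inequalities and circles\<close>

lemma quartic_nonneg_linear_coeff_zero:
  fixes a b c d :: real
  assumes "\<And>t. 0 \<le> a * t + b * t^2 + c * t^3 + d * t^4"
  shows "a = 0"
proof -
  have "((\<lambda>t. a * t + b * t^2 + c * t^3 + d * t^4) has_real_derivative a) (at 0)"
    by (auto intro!: derivative_eq_intros)
  then show ?thesis
    by (rule DERIV_local_min[where d=1]) (use assms in auto)
qed

lemma quadratic_nonneg_punctured:
  fixes a b c :: real
  assumes "\<And>e. e \<noteq> 0 \<Longrightarrow> 0 \<le> a + b * e + c * e^2"
  shows "0 \<le> a"
proof (rule tendsto_lowerbound)
  show "((\<lambda>e. a + b * e + c * e^2) \<longlongrightarrow> a) (at 0)"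
    by (auto intro!: tendsto_eq_intros)
  show "\<forall>\<^sub>F e in at 0. 0 \<le> a + b * e + c * e^2"
    using assms by (auto simp: eventually_at_filter)
qed simp

lemma norm_circle_point:
  fixes u w :: "'a::real_inner"
  assumes "norm u = r" "norm w = r" "u \<bullet> w = 0"
  shows "norm (u + (1 / (1 + t^2)) *\<^sub>R ((- 2 * t^2) *\<^sub>R u + (2 * t) *\<^sub>R w)) = r"
proof -
  define s where "s = 1 + t^2"
  define e where "e = (- 2 * t^2) *\<^sub>R u + (2 * t) *\<^sub>R w"
  have s0: "s > 0" unfolding s_def by (simp add: add_pos_nonneg)
  have uu: "u \<bullet> u = r\<^sup>2" and ww: "w \<bullet> w = r\<^sup>2"
    using assms by (simp_all add: power2_norm_eq_inner[symmetric])
  have "u \<bullet> e = - 2 * t^2 * r\<^sup>2"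
    by (simp add: e_def inner_add_right inner_diff_right uu assms(3))
  moreover have "e \<bullet> e = 4 * t^2 * s * r\<^sup>2"
    by (simp add: e_def s_def inner_add_left inner_add_right uu ww assms(3) inner_commute
        algebra_simps power2_eq_square power4_eq_xxxx)
  ultimately have "(u + (1 / s) *\<^sub>R e) \<bullet> (u + (1 / s) *\<^sub>R e) = r\<^sup>2"
    using s0 by (simp add: inner_add_left inner_add_right inner_commute uu power2_eq_square
        field_simps)
  moreover have "0 \<le> r" using assms(1) norm_ge_zero by blast
  ultimately show ?thesis unfolding s_def e_def by (simp add: norm_eq_sqrt_inner)
qed

section \<open>The projected trust-region subproblem\<close>

definition least_feasible :: "(real \<Rightarrow> 'a \<Rightarrow> bool) \<Rightarrow> real \<Rightarrow> 'a \<Rightarrow> bool" where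
  "least_feasible F l x \<longleftrightarrow> F l x \<and> (\<forall>l' x'. F l' x' \<longrightarrow> l \<le> l')"

text \<open>In the paper's setting \<open>P\<close> projects onto \<open>N(C\<^sup>T)\<close>, \<open>M = PAP\<close> and \<open>g = \<gamma>\<close>.\<close>

locale projected_trust_region =
  fixes P M :: "real^'n^'n" and b0 :: "real^'n" and g :: real
  assumes P_symmetric: "transpose P = P" and P_idempotent: "P ** P = P"
    and M_symmetric: "transpose M = M" and P_M: "P ** M = M" and M_P: "M ** P = M"
    and P_b0: "P *v b0 = b0" and b0_nonzero: "b0 \<noteq> 0" and g_pos: "0 < g"
begin

abbreviation shift :: "real \<Rightarrow> real^'n^'n" where
  "shift l \<equiv> M - mat l"

definition LG :: "real \<Rightarrow> real^'n \<Rightarrow> bool" where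
  "LG l u \<longleftrightarrow> shift l *v u = - b0 \<and> norm u = g \<and> P *v u = u"

definition QEP :: "real \<Rightarrow> real^'n \<Rightarrow> bool" where
  "QEP l z \<longleftrightarrow> z \<noteq> 0 \<and> P *v z = z \<and>
     (shift l ** shift l) *v z = inverse (g\<^sup>2) *\<^sub>R ((b0 \<bullet> z) *\<^sub>R b0)"

definition range_eigenvector :: "real \<Rightarrow> real^'n \<Rightarrow> bool" where
  "range_eigenvector l s \<longleftrightarrow> s \<noteq> 0 \<and> P *v s = s \<and> M *v s = l *\<^sub>R s"

lemma P_P_vec [simp]: "P *v (P *v x) = P *v x"
  using P_idempotent by (metis matrix_vector_mul_assoc)

lemma P_M_vec [simp]: "P *v (M *v x) = M *v x"
  using P_M by (metis matrix_vector_mul_assoc)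

lemma M_P_vec [simp]: "M *v (P *v x) = M *v x"
  using M_P by (metis matrix_vector_mul_assoc)

lemma shift_vec: "shift l *v x = M *v x - l *\<^sub>R x"
  by (simp add: matrix_vector_mult_diff_rdistrib)

lemma shift_inner: "x \<bullet> (shift l *v y) = (shift l *v x) \<bullet> y"
  using symmetric_matrix_inner[OF M_symmetric, of x y]
  by (simp add: shift_vec inner_diff_left inner_diff_right)

lemma shift_symmetric: "transpose (shift l) = shift l"
  by (rule symmetric_matrixI) (rule shift_inner)

lemma shift_P_commute: "shift l *v (P *v x) = P *v (shift l *v x)"
  by (simp add: shift_vec matrix_vector_mult_diff_distrib matrix_vector_mult_scaleR)

lemma shift_square_vec: "(shift l ** shift l) *v z = shift l *v (shift l *v z)"
  by (simp add: matrix_vector_mul_assoc)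

lemma range_eigenvector_iff_kernel:
  "range_eigenvector l s \<longleftrightarrow> s \<noteq> 0 \<and> P *v s = s \<and> shift l *v s = 0"
  by (simp add: range_eigenvector_def shift_vec)

lemma fixed_by_P_if_orthogonal_kernel:
  assumes "shift l *v (P *v y - y) = 0" and "\<And>k. shift l *v k = 0 \<Longrightarrow> y \<bullet> k = 0"
  shows "P *v y = y"
proof -
  define k where "k = P *v y - y"
  have yk: "y \<bullet> k = 0" using assms k_def by blast
  have "y \<bullet> (P *v (P *v y)) = (P *v y) \<bullet> (P *v y)"
    by (rule symmetric_matrix_inner[OF P_symmetric])
  then have "(y + k) \<bullet> k = 0" by (simp add: k_def inner_diff_right inner_commute)
  then have "k \<bullet> k = 0" using yk by (simp add: inner_add_left)
  then show ?thesis by (simp add: k_def)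
qed

lemma QEP_imp_LG:
  assumes "QEP l z" and bz: "b0 \<bullet> z \<noteq> 0"
  shows "LG l (- (g\<^sup>2 / (b0 \<bullet> z)) *\<^sub>R (shift l *v z))"
proof -
  define \<beta> where "\<beta> = b0 \<bullet> z"
  define u where "u = - (g\<^sup>2 / \<beta>) *\<^sub>R (shift l *v z)"
  have Pz: "P *v z = z" and E: "shift l *v (shift l *v z) = (\<beta> / g\<^sup>2) *\<^sub>R b0"
    using \<open>QEP l z\<close> unfolding QEP_def \<beta>_def by (auto simp: shift_square_vec field_simps)
  have "shift l *v u = - b0"
    using bz g_pos
    by (simp add: u_def \<beta>_def matrix_vector_mult_scaleR matrix_vector_mult_uminus_right E)
  moreover have "norm u = g"
  proof -
    have "(shift l *v z) \<bullet> (shift l *v z) = \<beta>\<^sup>2 / g\<^sup>2"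
      by (simp add: shift_inner[symmetric] E \<beta>_def inner_commute power2_eq_square)
    then have "u \<bullet> u = g\<^sup>2"
      using bz g_pos by (simp add: u_def \<beta>_def power2_eq_square)
    then show ?thesis using g_pos by (simp add: norm_eq_sqrt_inner)
  qed
  moreover have "P *v u = u"
    by (simp add: u_def matrix_vector_mult_scaleR matrix_vector_mult_uminus_right
        shift_P_commute[symmetric] Pz)
  ultimately show ?thesis unfolding LG_def u_def \<beta>_def by blast
qed

lemma LG_imp_QEP_eigenvector:
  assumes "LG l u" and "range_eigenvector l s"
  shows "QEP l s"
proof -
  have Xs: "shift l *v s = 0" and s: "s \<noteq> 0" "P *v s = s"
    using assms(2) by (auto simp: range_eigenvector_iff_kernel)
  have "b0 \<bullet> s = - ((shift l *v u) \<bullet> s)" using \<open>LG l u\<close> unfolding LG_def by simp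
  also have "\<dots> = 0" by (simp add: shift_inner[symmetric] Xs)
  finally show ?thesis using s Xs unfolding QEP_def by (simp add: shift_square_vec)
qed

lemma QEP_orthogonal_b0_imp_eigenvector:
  assumes "QEP l z" and "b0 \<bullet> z = 0"
  shows "range_eigenvector l z"
proof -
  have "shift l *v (shift l *v z) = 0"
    using assms unfolding QEP_def by (simp add: shift_square_vec)
  then have "(shift l *v z) \<bullet> (shift l *v z) = 0" by (simp add: shift_inner[symmetric])
  then show ?thesis using assms(1) unfolding QEP_def range_eigenvector_iff_kernel by simp
qed

lemma LG_imp_QEP_pinv:
  assumes "LG l u" and no_eig: "\<nexists>s. range_eigenvector l s"
  shows "QEP l (mp_pinv (shift l) *v u)"
proof -
  define z where "z = mp_pinv (shift l) *v u"
  have Xu: "shift l *v u = - b0" and nu: "norm u = g" and Pu: "P *v u = u"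
    using \<open>LG l u\<close> unfolding LG_def by auto
  define k where "k = u - shift l *v z"
  have Xk: "shift l *v k = 0"
    unfolding k_def z_def by (rule mp_pinv_residual_in_kernel[OF shift_symmetric])
  have "shift l *v (P *v k) = 0" by (simp add: shift_P_commute Xk)
  then have "P *v k = 0"
    using no_eig unfolding range_eigenvector_iff_kernel by (metis P_P_vec)
  then have "k \<bullet> u = 0"
    by (metis Pu P_symmetric symmetric_matrix_inner inner_zero_left)
  moreover have "k \<bullet> (shift l *v z) = 0" by (simp add: shift_inner Xk)
  moreover have "k \<bullet> k = k \<bullet> u - k \<bullet> (shift l *v z)"
    by (simp only: k_def inner_diff_right)
  ultimately have "k = 0" by simp
  then have Xz: "shift l *v z = u" by (simp add: k_def)
  have "z \<noteq> 0" using Xz nu g_pos by auto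
  moreover have "P *v z = z"
  proof (rule fixed_by_P_if_orthogonal_kernel)
    show "shift l *v (P *v z - z) = 0"
      by (simp add: matrix_vector_mult_diff_distrib shift_P_commute Xz Pu)
    show "z \<bullet> k' = 0" if "shift l *v k' = 0" for k'
      unfolding z_def by (rule mp_pinv_orthogonal_kernel[OF shift_symmetric that])
  qed
  moreover have "b0 \<bullet> z = - g\<^sup>2"
  proof -
    have "b0 \<bullet> z = - (u \<bullet> (shift l *v z))" using Xu by (simp add: shift_inner)
    also have "\<dots> = - g\<^sup>2" by (simp add: Xz flip: nu power2_norm_eq_inner)
    finally show ?thesis .
  qed
  ultimately show ?thesis
    unfolding QEP_def z_def[symmetric] using g_pos by (simp add: shift_square_vec Xz Xu)
qed

lemma LG_imp_QEP:
  assumes "LG l u"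
  shows "\<exists>z. QEP l z"
  using LG_imp_QEP_eigenvector[OF assms] LG_imp_QEP_pinv[OF assms] by blast

subsection \<open>Optimality conditions of the trust-region subproblem\<close>

definition trs_objective :: "real^'n \<Rightarrow> real" where
  "trs_objective v = (1/2) * (v \<bullet> (M *v v)) + b0 \<bullet> v"

definition trs_minimizer :: "real^'n \<Rightarrow> bool" where
  "trs_minimizer u \<longleftrightarrow> P *v u = u \<and> norm u = g \<and>
     (\<forall>v. P *v v = v \<and> norm v = g \<longrightarrow> trs_objective u \<le> trs_objective v)"

lemma trs_minimizer_exists: "\<exists>u. trs_minimizer u"
proof -
  define S where "S = {v. P *v v = v} \<inter> sphere 0 g"
  have "compact S"
    unfolding S_def
    by (intro closed_Int_compact compact_sphere closed_Collect_eq continuous_intros)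
  moreover have "(g / norm b0) *\<^sub>R b0 \<in> S"
    using b0_nonzero g_pos by (simp add: S_def matrix_vector_mult_scaleR P_b0)
  moreover have "continuous_on S trs_objective"
    unfolding trs_objective_def by (intro continuous_intros)
  ultimately obtain u where "u \<in> S" "\<And>v. v \<in> S \<Longrightarrow> trs_objective u \<le> trs_objective v"
    using continuous_attains_inf[of S trs_objective] by blast
  then have "trs_minimizer u" unfolding trs_minimizer_def S_def by simp
  then show ?thesis ..
qed

lemma trs_objective_diff:
  "trs_objective v - trs_objective u =
     (1/2) * ((v - u) \<bullet> (M *v (v - u))) + (v - u) \<bullet> (M *v u + b0)"
proof -
  have "u \<bullet> (M *v v) = v \<bullet> (M *v u)"
    by (metis symmetric_matrix_inner[OF M_symmetric] inner_commute)
  then show ?thesis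
    by (simp add: trs_objective_def matrix_vector_mult_diff_distrib inner_diff_left
        inner_diff_right inner_add_right inner_commute[of _ b0] algebra_simps)
qed

lemma trs_minimizer_stationary:
  assumes u: "trs_minimizer u" and Pw: "P *v w = w" and wu: "w \<bullet> u = 0"
  shows "(M *v u + b0) \<bullet> w = 0"
proof (cases "w = 0")
  case False
  define r where "r = M *v u + b0"
  define w' where "w' = (g / norm w) *\<^sub>R w"
  have Pu: "P *v u = u" and nu: "norm u = g" using u unfolding trs_minimizer_def by auto
  have Pw': "P *v w' = w'" by (simp add: w'_def matrix_vector_mult_scaleR Pw)
  have nw': "norm w' = g" using False g_pos by (simp add: w'_def)
  have uw': "u \<bullet> w' = 0" using wu by (simp add: w'_def inner_commute)
  have "0 \<le> (2 * (w' \<bullet> r)) * t + (2 * (w' \<bullet> (M *v w')) - 2 * (u \<bullet> r)) * t^2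
      + (2 * (w' \<bullet> r) - 4 * (u \<bullet> (M *v w'))) * t^3 + (2 * (u \<bullet> (M *v u)) - 2 * (u \<bullet> r)) * t^4"
    for t
  proof -
    \<comment> \<open>\<open>u + e/s\<close> runs through the great circle of \<open>u\<close> and \<open>w'\<close> and equals \<open>u\<close> at
      \<open>t = 0\<close>; the quartic is the objective increase times \<open>s\<^sup>2\<close>.\<close>
    define s where "s = 1 + t^2"
    define e where "e = (- 2 * t^2) *\<^sub>R u + (2 * t) *\<^sub>R w'"
    have s0: "s > 0" unfolding s_def by (simp add: add_pos_nonneg)
    have "norm (u + (1 / s) *\<^sub>R e) = g"
      unfolding s_def e_def by (rule norm_circle_point[OF nu nw' uw'])
    moreover have "P *v (u + (1 / s) *\<^sub>R e) = u + (1 / s) *\<^sub>R e"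
      by (simp add: e_def matrix_vector_right_distrib matrix_vector_mult_diff_distrib
          matrix_vector_mult_scaleR Pu Pw')
    ultimately have "0 \<le> trs_objective (u + (1 / s) *\<^sub>R e) - trs_objective u"
      using u unfolding trs_minimizer_def by auto
    also have "\<dots> = (1 / s)^2 * ((1/2) * (e \<bullet> (M *v e))) + (1 / s) * (e \<bullet> r)"
      by (simp add: trs_objective_diff r_def matrix_vector_mult_scaleR power2_eq_square)
    finally have "0 \<le> (1/2) * (e \<bullet> (M *v e)) + s * (e \<bullet> r)"
      using s0 mult_pos_pos[OF s0 s0]
      by (simp add: field_simps power2_eq_square zero_le_divide_iff)
    moreover have "u \<bullet> (M *v w') = w' \<bullet> (M *v u)"
      by (metis symmetric_matrix_inner[OF M_symmetric] inner_commute)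
    ultimately show ?thesis
      by (simp add: s_def e_def matrix_vector_right_distrib matrix_vector_mult_scaleR
          inner_add_left inner_add_right algebra_simps power2_eq_square power3_eq_cube
          power4_eq_xxxx)
  qed
  then have "w' \<bullet> r = 0" using quartic_nonneg_linear_coeff_zero by fastforce
  then show ?thesis using False g_pos by (simp add: w'_def r_def inner_commute)
qed simp

lemma trs_minimizer_multiplier:
  assumes u: "trs_minimizer u"
  obtains l where "M *v u + b0 = l *\<^sub>R u"
proof
  define r where "r = M *v u + b0"
  define l where "l = (r \<bullet> u) / g\<^sup>2"
  have Pu: "P *v u = u" and uu: "u \<bullet> u = g\<^sup>2"
    using u unfolding trs_minimizer_def by (auto simp: power2_norm_eq_inner)
  define d where "d = r - l *\<^sub>R u"
  have "P *v d = d"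
    by (simp add: d_def r_def matrix_vector_mult_diff_distrib matrix_vector_right_distrib
        matrix_vector_mult_scaleR Pu P_b0)
  moreover have du: "d \<bullet> u = 0" using g_pos by (simp add: d_def inner_diff_left uu l_def)
  ultimately have "r \<bullet> d = 0" unfolding r_def by (rule trs_minimizer_stationary[OF u])
  then have "d \<bullet> d = 0" using du by (simp add: d_def inner_diff_left inner_commute)
  then show "M *v u + b0 = l *\<^sub>R u" by (simp add: d_def r_def)
qed

lemma trs_minimizer_second_order:
  assumes u: "trs_minimizer u" and l: "M *v u + b0 = l *\<^sub>R u" and Pd: "P *v d = d"
  shows "0 \<le> d \<bullet> (shift l *v d)"
proof -
  have Pu: "P *v u = u" and uu: "u \<bullet> u = g\<^sup>2"
    using u unfolding trs_minimizer_def by (auto simp: power2_norm_eq_inner)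
  have reflection: "0 \<le> d \<bullet> (shift l *v d)" if Pd: "P *v d = d" and du: "d \<bullet> u \<noteq> 0" for d
  proof -
    \<comment> \<open>\<open>u - c d\<close> is the reflection of \<open>u\<close> in the hyperplane orthogonal to \<open>d\<close>\<close>
    define c where "c = 2 * (d \<bullet> u) / (d \<bullet> d)"
    have dd: "d \<bullet> d > 0" using du by (metis inner_zero_left inner_gt_zero_iff)
    then have c: "c \<noteq> 0" "c * (d \<bullet> d) = 2 * (d \<bullet> u)" using du by (simp_all add: c_def)
    have "(u - c *\<^sub>R d) \<bullet> (u - c *\<^sub>R d) = u \<bullet> u - c * (2 * (d \<bullet> u) - c * (d \<bullet> d))"
      by (simp add: inner_diff_left inner_diff_right inner_commute algebra_simps)
    then have "norm (u - c *\<^sub>R d) = g" using c g_pos uu by (simp add: norm_eq_sqrt_inner)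
    moreover have "P *v (u - c *\<^sub>R d) = u - c *\<^sub>R d"
      by (simp add: matrix_vector_mult_diff_distrib matrix_vector_mult_scaleR Pu Pd)
    ultimately have "0 \<le> trs_objective (u - c *\<^sub>R d) - trs_objective u"
      using u unfolding trs_minimizer_def by auto
    also have "\<dots> = (1/2) * c\<^sup>2 * (d \<bullet> (shift l *v d))"
      unfolding trs_objective_diff l using c
      by (simp add: shift_vec matrix_vector_mult_scaleR matrix_vector_mult_uminus_right
          inner_diff_right power2_eq_square algebra_simps)
    finally show ?thesis using c by (simp add: zero_le_mult_iff)
  qed
  show ?thesis
  proof (cases "d \<bullet> u = 0")
    case True
    have "0 \<le> d \<bullet> (shift l *v d) + (d \<bullet> (shift l *v u) + u \<bullet> (shift l *v d)) * e
        + (u \<bullet> (shift l *v u)) * e\<^sup>2" if "e \<noteq> 0" for e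
    proof -
      have "0 \<le> (d + e *\<^sub>R u) \<bullet> (shift l *v (d + e *\<^sub>R u))"
        using True that g_pos
        by (intro reflection) (simp_all add: matrix_vector_right_distrib matrix_vector_mult_scaleR
            Pd Pu inner_add_left uu)
      then show ?thesis
        by (simp add: matrix_vector_right_distrib matrix_vector_mult_scaleR inner_add_left
            inner_add_right power2_eq_square algebra_simps)
    qed
    then show ?thesis by (rule quadratic_nonneg_punctured)
  qed (use Pd reflection in blast)
qed

lemma exists_LG_below_eigenvalues:
  obtains l u where "LG l u" and "\<And>\<mu> s. range_eigenvector \<mu> s \<Longrightarrow> l \<le> \<mu>"
proof -
  obtain u where u: "trs_minimizer u" using trs_minimizer_exists ..
  obtain l where l: "M *v u + b0 = l *\<^sub>R u" using trs_minimizer_multiplier[OF u] .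
  have "LG l u"
    using u l unfolding LG_def trs_minimizer_def by (simp add: shift_vec algebra_simps)
  moreover have "l \<le> \<mu>" if "range_eigenvector \<mu> s" for \<mu> s
  proof -
    have s: "s \<noteq> 0" "P *v s = s" "M *v s = \<mu> *\<^sub>R s"
      using that unfolding range_eigenvector_def by auto
    have "0 \<le> s \<bullet> (shift l *v s)" by (rule trs_minimizer_second_order[OF u l s(2)])
    also have "\<dots> = (\<mu> - l) * (s \<bullet> s)" by (simp add: shift_vec s(3) algebra_simps)
    finally have "0 \<le> (\<mu> - l) * (s \<bullet> s)" .
    moreover have "0 < s \<bullet> s" using s(1) by simp
    ultimately show ?thesis by (simp add: zero_le_mult_iff)
  qed
  ultimately show ?thesis using that by blast
qed

lemma least_LG_le_QEP:
  assumes "least_feasible LG l u" and "QEP l' z"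
  shows "l \<le> l'"
proof (cases "b0 \<bullet> z = 0")
  case True
  obtain lg ug where "LG lg ug" and "\<And>\<mu> s. range_eigenvector \<mu> s \<Longrightarrow> lg \<le> \<mu>"
    using exists_LG_below_eigenvalues by blast
  then have "lg \<le> l'" using QEP_orthogonal_b0_imp_eigenvector[OF assms(2) True] by blast
  moreover have "l \<le> lg" using assms(1) \<open>LG lg ug\<close> unfolding least_feasible_def by blast
  ultimately show ?thesis by simp
next
  case False
  then show ?thesis using QEP_imp_LG[OF assms(2)] assms(1) unfolding least_feasible_def by blast
qed

lemma least_LG_imp_least_QEP:
  assumes "least_feasible LG l u"
  shows "(\<exists>z. least_feasible QEP l z) \<and>
    ((\<nexists>s. range_eigenvector l s) \<longrightarrow> least_feasible QEP l (mp_pinv (shift l) *v u)) \<and>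
    (\<forall>s. range_eigenvector l s \<longrightarrow> least_feasible QEP l s)"
proof -
  have "LG l u" using assms unfolding least_feasible_def by blast
  moreover have "least_feasible QEP l z" if "QEP l z" for z
    using that least_LG_le_QEP[OF assms] unfolding least_feasible_def by blast
  ultimately show ?thesis using LG_imp_QEP LG_imp_QEP_pinv LG_imp_QEP_eigenvector by blast
qed

lemma LG_kernel_completion:
  assumes "LG l u" and "range_eigenvector l z"
  shows "let x = - (mp_pinv (shift l) *v b0) in
    norm x \<le> g \<and> LG l (x + sqrt (g\<^sup>2 - (norm x)\<^sup>2) *\<^sub>R ((1 / norm z) *\<^sub>R z))"
proof -
  define x where "x = - (mp_pinv (shift l) *v b0)"
  have Xu: "shift l *v u = - b0" and nu: "norm u = g"
    using \<open>LG l u\<close> unfolding LG_def by auto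
  have Xz: "shift l *v z = 0" and z: "z \<noteq> 0" "P *v z = z"
    using assms(2) unfolding range_eigenvector_iff_kernel by auto
  have x_pinv: "x = mp_pinv (shift l) *v (- b0)"
    by (simp add: x_def matrix_vector_mult_uminus_right)
  have x_orth: "x \<bullet> k = 0" if "shift l *v k = 0" for k
    unfolding x_pinv by (rule mp_pinv_orthogonal_kernel[OF shift_symmetric that])
  have Xx: "shift l *v x = - b0"
    unfolding x_pinv by (rule mp_pinv_solves[OF shift_symmetric Xu])
  have "norm x \<le> g"
    unfolding x_pinv nu[symmetric] by (rule mp_pinv_min_norm[OF shift_symmetric Xu])
  have Px: "P *v x = x"
  proof (rule fixed_by_P_if_orthogonal_kernel[OF _ x_orth])
    show "shift l *v (P *v x - x) = 0"
      by (simp add: matrix_vector_mult_diff_distrib shift_P_commute Xx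
          matrix_vector_mult_uminus_right P_b0)
  qed
  define c where "c = sqrt (g\<^sup>2 - (norm x)\<^sup>2)"
  define v where "v = x + c *\<^sub>R ((1 / norm z) *\<^sub>R z)"
  have "shift l *v v = - b0"
    by (simp add: v_def matrix_vector_right_distrib matrix_vector_mult_scaleR Xx Xz)
  moreover have "norm v = g"
  proof -
    have "orthogonal x (c *\<^sub>R ((1 / norm z) *\<^sub>R z))"
      using x_orth[OF Xz] by (simp add: orthogonal_def)
    then have "(norm v)\<^sup>2 = (norm x)\<^sup>2 + c\<^sup>2"
      using z by (simp add: v_def norm_add_Pythagorean c_def)
    also have "\<dots> = g\<^sup>2" using \<open>norm x \<le> g\<close> by (simp add: c_def power_mono)
    finally show ?thesis using g_pos by simp
  qed
  moreover have "P *v v = v"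
    by (simp add: v_def matrix_vector_right_distrib matrix_vector_mult_scaleR Px z)
  ultimately show ?thesis
    using \<open>norm x \<le> g\<close> unfolding LG_def Let_def x_def[symmetric] c_def[symmetric] v_def[symmetric]
    by blast
qed

lemma least_QEP_imp_least_LG:
  assumes "least_feasible QEP l z"
  shows "(\<exists>u. least_feasible LG l u) \<and>
    (b0 \<bullet> z \<noteq> 0 \<longrightarrow> least_feasible LG l (- (g\<^sup>2 / (b0 \<bullet> z)) *\<^sub>R (shift l *v z))) \<and>
    (b0 \<bullet> z = 0 \<longrightarrow> (let x = - (mp_pinv (shift l) *v b0) in norm x \<le> g \<and>
        least_feasible LG l (x + sqrt (g\<^sup>2 - (norm x)\<^sup>2) *\<^sub>R ((1 / norm z) *\<^sub>R z))))"
proof -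
  have Qz: "QEP l z" using assms unfolding least_feasible_def by blast
  have least: "least_feasible LG l u" if "LG l u" for u
    using that LG_imp_QEP assms unfolding least_feasible_def by blast
  show ?thesis
  proof (cases "b0 \<bullet> z = 0")
    case True
    have eig: "range_eigenvector l z" by (rule QEP_orthogonal_b0_imp_eigenvector[OF Qz True])
    obtain lg ug where "LG lg ug" and below: "\<And>\<mu> s. range_eigenvector \<mu> s \<Longrightarrow> lg \<le> \<mu>"
      using exists_LG_below_eigenvalues by blast
    have "lg \<le> l" using below[OF eig] .
    moreover have "l \<le> lg"
      using LG_imp_QEP[OF \<open>LG lg ug\<close>] assms unfolding least_feasible_def by blast
    ultimately have "LG l ug" using \<open>LG lg ug\<close> by simp
    then have "let x = - (mp_pinv (shift l) *v b0) in
        norm x \<le> g \<and> LG l (x + sqrt (g\<^sup>2 - (norm x)\<^sup>2) *\<^sub>R ((1 / norm z) *\<^sub>R z))"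
      using LG_kernel_completion eig by blast
    then show ?thesis using True least unfolding Let_def by blast
  next
    case False
    then show ?thesis using least QEP_imp_LG[OF Qz] by blast
  qed
qed

end

section \<open>The projector onto the null space of \<open>C\<^sup>T\<close>\<close>

lemma projP_vec:
  "projP C *v x = x - C *v (matrix_inv (transpose C ** C) *v (transpose C *v x))"
  by (simp add: projP_def matrix_vector_mult_diff_rdistrib matrix_vector_mul_assoc[symmetric]
      del: transpose_matrix_vector)

context
  fixes C :: "real^'m^'n"
  assumes rankC: "rank C = CARD('m)"
begin

lemma transpose_projP_vec: "transpose C *v (projP C *v x) = 0"
proof -
  let ?G = "transpose C ** C"
  have inv: "?G *v (matrix_inv ?G *v y) = y" for y
    using matrix_inv_invertible(1)[OF invertible_gram_matrix[OF rankC]]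
    by (metis matrix_vector_mul_assoc matrix_vector_mul_lid)
  have "transpose C *v (C *v v) = ?G *v v" for v
    by (simp add: matrix_vector_mul_assoc del: transpose_matrix_vector)
  then show ?thesis
    by (simp add: projP_vec matrix_vector_mult_diff_distrib inv del: transpose_matrix_vector)
qed

lemma projP_symmetric: "transpose (projP C) = projP C"
proof (rule symmetric_matrixI)
  fix x y
  let ?Gi = "matrix_inv (transpose C ** C)"
  have "transpose ?Gi = ?Gi"
    by (rule matrix_inv_symmetric[OF invertible_gram_matrix[OF rankC]])
      (simp add: matrix_transpose_mul)
  have "x \<bullet> (C *v (?Gi *v (transpose C *v y))) = (transpose C *v x) \<bullet> (?Gi *v (transpose C *v y))"
    by (rule inner_matrix_transpose)
  also have "\<dots> = (?Gi *v (transpose C *v x)) \<bullet> (transpose C *v y)"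
    by (rule symmetric_matrix_inner) fact
  also have "\<dots> = (C *v (?Gi *v (transpose C *v x))) \<bullet> y"
    by (metis inner_matrix_transpose inner_commute)
  finally show "x \<bullet> (projP C *v y) = (projP C *v x) \<bullet> y"
    by (simp add: projP_vec inner_diff_left inner_diff_right inner_commute[of x y]
        del: transpose_matrix_vector)
qed

lemma projP_idempotent: "projP C ** projP C = projP C"
proof -
  have "projP C *v (projP C *v x) = projP C *v x" for x
    using transpose_projP_vec[of x] projP_vec[of C "projP C *v x"] by simp
  then show ?thesis by (simp add: matrix_eq matrix_vector_mul_assoc)
qed

lemma nullT_projP: "nullT C = {x. projP C *v x = x}"
proof (intro set_eqI iffI)
  fix x
  show "x \<in> {x. projP C *v x = x}" if "x \<in> nullT C"
    using that by (simp add: nullT_def projP_vec del: transpose_matrix_vector)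
  show "x \<in> nullT C" if "x \<in> {x. projP C *v x = x}"
    using that transpose_projP_vec[of x] by (simp add: nullT_def del: transpose_matrix_vector)
qed

end

lemma projected_trust_region_PAP:
  fixes A :: "real^'n^'n" and C :: "real^'m^'n" and b :: "real^'m"
  assumes "transpose A = A" and "rank C = CARD('m)" and "norm (nvec C b) < 1"
    and "bvec A C b \<noteq> 0"
  shows "projected_trust_region (projP C) (PAP A C) (bvec A C b) (gam C b)"
proof
  note P = projP_symmetric[OF assms(2)] projP_idempotent[OF assms(2)]
  show "transpose (projP C) = projP C" "projP C ** projP C = projP C" by (fact P)+
  show "transpose (PAP A C) = PAP A C"
    by (simp add: PAP_def matrix_transpose_mul P assms(1) matrix_mul_assoc)
  show "projP C ** PAP A C = PAP A C"
    by (simp add: PAP_def P matrix_mul_assoc)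
  show "PAP A C ** projP C = PAP A C"
    by (simp add: PAP_def P flip: matrix_mul_assoc)
  show "projP C *v bvec A C b = bvec A C b"
    by (simp add: bvec_def matrix_vector_mul_assoc matrix_mul_assoc P)
  show "bvec A C b \<noteq> 0" by fact
  have "(norm (nvec C b))\<^sup>2 < 1" using assms(3) by (simp add: abs_square_less_1)
  then show "0 < gam C b" by (simp add: gam_def)
qed

lemma LG_min_least_feasible: "LG_min A C b = least_feasible (LG_feasible A C b)"
  by (simp add: fun_eq_iff LG_min_def least_feasible_def)

lemma QEP_min_least_feasible: "QEP_min A C b = least_feasible (QEP_feasible A C b)"
  by (simp add: fun_eq_iff QEP_min_def least_feasible_def)

theorem theorem2p8:
  fixes A :: "real^'n^'n" and C :: "real^'m^'n" and b :: "real^'m"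
  assumes symA: "transpose A = A"
    and mn: "CARD('m) < CARD('n)"
    and rankC: "rank C = CARD('m)"
    and n0: "norm (nvec C b) < 1"
    and b0: "bvec A C b \<noteq> 0"
  shows
    "(\<forall>lam u. LG_min A C b lam u \<longrightarrow>
        (\<exists>z. QEP_min A C b lam z) \<and>
        ((\<not> (\<exists>s. s \<noteq> 0 \<and> s \<in> nullT C \<and> PAP A C *v s = lam *\<^sub>R s)) \<longrightarrow>
            QEP_min A C b lam (mp_pinv (PAP A C - mat lam) *v u)) \<and>
        (\<forall>s. lam \<in> eig (PAP A C) \<and> s \<noteq> 0 \<and> s \<in> nullT C \<and> PAP A C *v s = lam *\<^sub>R s \<longrightarrow>
            QEP_min A C b lam s))
   \<and>
    (\<forall>lam z. QEP_min A C b lam z \<longrightarrow>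
        (\<exists>u. LG_min A C b lam u) \<and>
        (bvec A C b \<bullet> z \<noteq> 0 \<longrightarrow>
            LG_min A C b lam
              (- ((gam C b)\<^sup>2 / (bvec A C b \<bullet> z)) *\<^sub>R ((PAP A C - mat lam) *v z))) \<and>
        (bvec A C b \<bullet> z = 0 \<longrightarrow>
            (let x = - (mp_pinv (PAP A C - mat lam) *v bvec A C b) in
               norm x \<le> gam C b \<and>
               LG_min A C b lam
                 (x + sqrt ((gam C b)\<^sup>2 - (norm x)\<^sup>2) *\<^sub>R ((1 / norm z) *\<^sub>R z)))))"
proof -
  interpret projected_trust_region "projP C" "PAP A C" "bvec A C b" "gam C b"
    using symA rankC n0 b0 by (rule projected_trust_region_PAP)
  have "LG_feasible A C b = LG" "QEP_feasible A C b = QEP"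
    by (simp_all add: fun_eq_iff LG_feasible_def LG_def QEP_feasible_def QEP_def
        nullT_projP[OF rankC])
  then have "LG_min A C b = least_feasible LG" "QEP_min A C b = least_feasible QEP"
    by (simp_all add: LG_min_least_feasible QEP_min_least_feasible)
  then show ?thesis
    using least_LG_imp_least_QEP least_QEP_imp_least_LG
    by (simp add: range_eigenvector_def nullT_projP[OF rankC])
qed

end
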